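(* Let $\Omega\subseteq\mathbb{R}^{m\times m}$, let $\mathcal{P}\subseteq\mathbb{R}^{m\times m}$, and let $s:\Omega^2\times\mathcal{P}\to\mathbb{R}$ be a $P$-score. Let $n\ge 2$ and define the $\mathcal{G}$-align distance function induced by $s$ as $d_{\mathcal{G}}:\Omega^n\to\mathbb{R}$, $$d_{\mathcal{G}}(A_1,\dots,A_n)=\min_{P\in S}\frac12\sum_{i,j\in[n]} s(A_i,A_j,P_{i,j}),$$ where $S$ is the set of families $\{P_{i,j}\}_{i,j\in[n]}$ with $P_{i,j}\in\mathcal{P}$ for all $i,j$, $P_{i,k}P_{k,j}=P_{i,j}$ for all $i,j,k\in[n]$, and $P_{i,i}=I$ for all $i\in[n]$. Then $d_{\mathcal{G}}$ is a pseudo $n$-metric.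
   Context: $[n]=\{1,\dots,n\}$. A map $s:\Omega^2\times\mathcal{P}\to\mathbb{R}$ is a $P$-score if $\mathcal{P}$ is closed under inversion (and, implicitly, contains $I$ and the products appearing below), and for all $P,P'\in\mathcal{P}$ and $A,B,C\in\Omega$: $s(A,B,P)\ge 0$; $s(A,A,I)=0$; $s(A,B,P)=s(B,A,P^{-1})$; $s(A,B,P)+s(B,C,P')\ge s(A,C,PP')$. Notation: $A_{1:n}=(A_1,\dots,A_n)$; for $A_{n+1}\in\Omega$, $A^i_{1:n,n+1}$ is $A_{1:n}$ with $A_i$ replaced by $A_{n+1}$; $A_{\sigma(1:n)}$ is the sequence with $i$-th entry $A_{\sigma(i)}$ for a permutation $\sigma$. A map $D:\Omega^n\to\mathbb{R}$ is a pseudo $n$-metric if for all $A_1,\dots,A_{n+1}\in\Omega$ and all permutations $\sigma$: $D(A_{1:n})\ge0$; $D(A_{1:n})=D(A_{\sigma(1:n)})$; $D(A_{1:n})\le\sum_{i=1}^n D(A^i_{1:n,n+1})$; and $D(A,\dots,A)=0$ for all $A\in\Omega$. *)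

theory Defs
  imports "HOL-Analysis.Analysis" "HOL-Combinatorics.Permutations"
begin

type_synonym 'm mat = "real^'m^'m"

text \<open>The set \<P> is assumed to contain
  the identity, to be closed under inversion (its elements being invertible) and under the
  products appearing in the triangle inequality.\<close>
definition is_P_score :: "'m::finite mat set \<Rightarrow> 'm mat set \<Rightarrow> ('m mat \<Rightarrow> 'm mat \<Rightarrow> 'm mat \<Rightarrow> real) \<Rightarrow> bool" where
  "is_P_score \<Omega> \<P> s \<longleftrightarrow>
     mat 1 \<in> \<P> \<and>
     (\<forall>P\<in>\<P>. invertible P \<and> matrix_inv P \<in> \<P>) \<and>
     (\<forall>P\<in>\<P>. \<forall>P'\<in>\<P>. P ** P' \<in> \<P>) \<and>
     (\<forall>A\<in>\<Omega>. \<forall>B\<in>\<Omega>. \<forall>P\<in>\<P>. s A B P \<ge> 0) \<and>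
     (\<forall>A\<in>\<Omega>. s A A (mat 1) = 0) \<and>
     (\<forall>A\<in>\<Omega>. \<forall>B\<in>\<Omega>. \<forall>P\<in>\<P>. s A B P = s B A (matrix_inv P)) \<and>
     (\<forall>A\<in>\<Omega>. \<forall>B\<in>\<Omega>. \<forall>C\<in>\<Omega>. \<forall>P\<in>\<P>. \<forall>P'\<in>\<P>. s A B P + s B C P' \<ge> s A C (P ** P'))"

definition pseudo_n_metric :: "'a set \<Rightarrow> nat \<Rightarrow> ((nat \<Rightarrow> 'a) \<Rightarrow> real) \<Rightarrow> bool" where
  "pseudo_n_metric \<Omega> n D \<longleftrightarrow>
     (\<forall>A. (\<forall>i\<in>{1..n}. A i \<in> \<Omega>) \<longrightarrow> D A \<ge> 0) \<and>
     (\<forall>A \<sigma>. (\<forall>i\<in>{1..n}. A i \<in> \<Omega>) \<longrightarrow> \<sigma> permutes {1..n} \<longrightarrow> D A = D (\<lambda>i. A (\<sigma> i))) \<and>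
     (\<forall>A. (\<forall>i\<in>{1..Suc n}. A i \<in> \<Omega>) \<longrightarrow> D A \<le> (\<Sum>i=1..n. D (A(i := A (Suc n))))) \<and>
     (\<forall>X\<in>\<Omega>. D (\<lambda>_. X) = 0)"

definition sync_families :: "'m::finite mat set \<Rightarrow> nat \<Rightarrow> (nat \<Rightarrow> nat \<Rightarrow> 'm mat) set" where
  "sync_families \<P> n = {P.
     (\<forall>i\<in>{1..n}. \<forall>j\<in>{1..n}. P i j \<in> \<P>) \<and>
     (\<forall>i\<in>{1..n}. \<forall>j\<in>{1..n}. \<forall>k\<in>{1..n}. P i k ** P k j = P i j) \<and>
     (\<forall>i\<in>{1..n}. P i i = mat 1)}"

text \<open>G-align distance; the minimum of the paper is rendered as an infimum.\<close>
definition G_align_dist :: "('m::finite mat \<Rightarrow> 'm mat \<Rightarrow> 'm mat \<Rightarrow> real) \<Rightarrow> 'm mat set \<Rightarrow> nat \<Rightarrow> (nat \<Rightarrow> 'm mat) \<Rightarrow> real" where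
  "G_align_dist s \<P> n A = Inf ((\<lambda>P. (1/2) * (\<Sum>i=1..n. \<Sum>j=1..n. s (A i) (A j) (P i j))) ` sync_families \<P> n)"

end

theory Submission
  imports Defs
begin

(* Nonnegativity and vanishing on constant tuples are immediate because the constant family
  mat 1 is synchronized, and permutation invariance holds because reindexing by a permutation
  maps the synchronized families bijectively onto themselves.
  For the triangle inequality take synchronized families p k for the tuples A(k := X).
  Conjugating p 1 by a matrix R at index 1 yields a synchronized family for A whose cost, by the
  triangle inequality of the score routed through X, exceeds that of p 1 by at most
  (n - 1) s (A 1) X R. The cost of p k is at least s (A 1) X (p k 1 k), so choosing
  R = p b 1 b with b minimising this quantity over k = 2..n bounds the excess by the costs of
  p 2, ..., p n. Passing to infima over the p k gives the claim. *)

lemma invertible_matrix_inv: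
  fixes A :: "'a::semiring_1^'n^'m"
  assumes "invertible A"
  shows matrix_inv_right: "A ** matrix_inv A = mat 1"
    and matrix_inv_left: "matrix_inv A ** A = mat 1"
proof -
  have "\<exists>A'. A ** A' = mat 1 \<and> A' ** A = mat 1"
    using assms unfolding invertible_def by blast
  then have "A ** matrix_inv A = mat 1 \<and> matrix_inv A ** A = mat 1"
    unfolding matrix_inv_def by (rule someI_ex)
  then show "A ** matrix_inv A = mat 1" "matrix_inv A ** A = mat 1" by auto
qed

lemma matrix_inv_mat_1: "matrix_inv (mat 1 :: 'a::semiring_1^'n^'n) = mat 1"
proof -
  have "invertible (mat 1 :: 'a^'n^'n)"
    unfolding invertible_def by (auto intro: exI[of _ "mat 1"])
  then show ?thesis
    using matrix_inv_left matrix_mul_rid by metis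
qed

lemma le_sum_cInf_if_le_sum_choice:
  fixes x :: real and g :: "'i \<Rightarrow> 'a \<Rightarrow> real"
  assumes "finite I"
    and "\<And>k. k \<in> I \<Longrightarrow> S k \<noteq> {}"
    and "\<And>k. k \<in> I \<Longrightarrow> bdd_below (g k ` S k)"
    and "\<And>p. (\<And>k. k \<in> I \<Longrightarrow> p k \<in> S k) \<Longrightarrow> x \<le> (\<Sum>k\<in>I. g k (p k))"
  shows "x \<le> (\<Sum>k\<in>I. Inf (g k ` S k))"
  using assms
proof (induction I arbitrary: x)
  case empty
  then show ?case by simp
next
  case (insert k I)
  have "x - g k q \<le> (\<Sum>l\<in>I. Inf (g l ` S l))" if "q \<in> S k" for q
  proof (rule insert.IH)
    fix p assume "\<And>l. l \<in> I \<Longrightarrow> p l \<in> S l"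
    then have "x \<le> (\<Sum>l\<in>insert k I. g l ((p(k := q)) l))"
      by (intro insert.prems(3)) (use \<open>q \<in> S k\<close> in auto)
    also have "\<dots> = g k q + (\<Sum>l\<in>I. g l (p l))"
      using insert.hyps by (auto intro: sum.cong)
    finally show "x - g k q \<le> (\<Sum>l\<in>I. g l (p l))" by simp
  qed (use insert.prems in auto)
  then have "x - (\<Sum>l\<in>I. Inf (g l ` S l)) \<le> Inf (g k ` S k)"
    using insert.prems(1) by (intro cInf_greatest) force+
  then show ?case
    using insert.hyps by simp
qed

definition align_cost :: "('m::finite mat \<Rightarrow> 'm mat \<Rightarrow> 'm mat \<Rightarrow> real) \<Rightarrow> nat \<Rightarrow>
    (nat \<Rightarrow> 'm mat) \<Rightarrow> (nat \<Rightarrow> nat \<Rightarrow> 'm mat) \<Rightarrow> real" where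
  "align_cost s n A P = (1/2) * (\<Sum>i=1..n. \<Sum>j=1..n. s (A i) (A j) (P i j))"

lemma G_align_dist_eq_Inf_align_cost:
  "G_align_dist s \<P> n A = Inf (align_cost s n A ` sync_families \<P> n)"
  unfolding G_align_dist_def align_cost_def ..

lemma align_cost_permute:
  assumes "\<sigma> permutes {1..n}"
  shows "align_cost s n (\<lambda>i. A (\<sigma> i)) (\<lambda>i j. P (\<sigma> i) (\<sigma> j)) = align_cost s n A P"
proof -
  have "(\<Sum>j=1..n. s (A (\<sigma> i)) (A (\<sigma> j)) (P (\<sigma> i) (\<sigma> j)))
      = (\<Sum>j=1..n. s (A (\<sigma> i)) (A j) (P (\<sigma> i) j))" for i
    using sum.permute[OF assms, of "\<lambda>j. s (A (\<sigma> i)) (A j) (P (\<sigma> i) j)"] by (simp add: comp_def)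
  moreover have "(\<Sum>i=1..n. \<Sum>j=1..n. s (A (\<sigma> i)) (A j) (P (\<sigma> i) j))
      = (\<Sum>i=1..n. \<Sum>j=1..n. s (A i) (A j) (P i j))"
    using sum.permute[OF assms, of "\<lambda>i. \<Sum>j=1..n. s (A i) (A j) (P i j)"] by (simp add: comp_def)
  ultimately show ?thesis
    unfolding align_cost_def by simp
qed

lemma sync_families_permute:
  assumes "\<sigma> permutes {1..n}"
  shows "(\<lambda>P i j. P (\<sigma> i) (\<sigma> j)) ` sync_families \<P> n = sync_families \<P> n"
proof -
  have closed: "(\<lambda>i j. P (\<tau> i) (\<tau> j)) \<in> sync_families \<P> n"
    if "\<tau> permutes {1..n}" "P \<in> sync_families \<P> n" for \<tau> P
  proof -
    have "\<tau> i \<in> {1..n} \<longleftrightarrow> i \<in> {1..n}" for i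
      using permutes_in_image[OF \<open>\<tau> permutes {1..n}\<close>] .
    then show ?thesis
      using \<open>P \<in> sync_families \<P> n\<close> unfolding sync_families_def by simp
  qed
  show ?thesis
  proof
    show "(\<lambda>P i j. P (\<sigma> i) (\<sigma> j)) ` sync_families \<P> n \<subseteq> sync_families \<P> n"
      using closed[OF assms] by blast
  next
    show "sync_families \<P> n \<subseteq> (\<lambda>P i j. P (\<sigma> i) (\<sigma> j)) ` sync_families \<P> n"
    proof
      fix P assume "P \<in> sync_families \<P> n"
      have "P = (\<lambda>i j. P (inv \<sigma> (\<sigma> i)) (inv \<sigma> (\<sigma> j)))"
        using permutes_inverses(2)[OF assms] by simp
      then show "P \<in> (\<lambda>P i j. P (\<sigma> i) (\<sigma> j)) ` sync_families \<P> n"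
        using closed[OF permutes_inv[OF assms] \<open>P \<in> sync_families \<P> n\<close>] by (rule image_eqI)
    qed
  qed
qed

lemma G_align_dist_permute:
  assumes "\<sigma> permutes {1..n}"
  shows "G_align_dist s \<P> n (\<lambda>i. A (\<sigma> i)) = G_align_dist s \<P> n A"
proof -
  have "align_cost s n (\<lambda>i. A (\<sigma> i)) ` (\<lambda>P i j. P (\<sigma> i) (\<sigma> j)) ` sync_families \<P> n
      = align_cost s n A ` sync_families \<P> n"
    unfolding image_image align_cost_permute[OF assms] ..
  then show ?thesis
    unfolding G_align_dist_eq_Inf_align_cost sync_families_permute[OF assms] by simp
qed

locale P_score =
  fixes \<Omega> \<P> :: "'m::finite mat set"
    and s :: "'m mat \<Rightarrow> 'm mat \<Rightarrow> 'm mat \<Rightarrow> real"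
  assumes is_P_score: "is_P_score \<Omega> \<P> s"
begin

lemma mat_1_mem: "mat 1 \<in> \<P>"
  using is_P_score unfolding is_P_score_def by blast

lemma invertible_if_mem: "P \<in> \<P> \<Longrightarrow> invertible P"
  using is_P_score unfolding is_P_score_def by blast

lemma matrix_inv_mem: "P \<in> \<P> \<Longrightarrow> matrix_inv P \<in> \<P>"
  using is_P_score unfolding is_P_score_def by blast

lemma matrix_mul_mem: "P \<in> \<P> \<Longrightarrow> P' \<in> \<P> \<Longrightarrow> P ** P' \<in> \<P>"
  using is_P_score unfolding is_P_score_def by blast

lemma score_nonneg: "A \<in> \<Omega> \<Longrightarrow> B \<in> \<Omega> \<Longrightarrow> P \<in> \<P> \<Longrightarrow> 0 \<le> s A B P"
  using is_P_score unfolding is_P_score_def by blast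

lemma score_self: "A \<in> \<Omega> \<Longrightarrow> s A A (mat 1) = 0"
  using is_P_score unfolding is_P_score_def by blast

lemma score_commute: "A \<in> \<Omega> \<Longrightarrow> B \<in> \<Omega> \<Longrightarrow> P \<in> \<P> \<Longrightarrow> s A B P = s B A (matrix_inv P)"
  using is_P_score unfolding is_P_score_def by blast

lemma score_triangle:
  "A \<in> \<Omega> \<Longrightarrow> B \<in> \<Omega> \<Longrightarrow> C \<in> \<Omega> \<Longrightarrow> P \<in> \<P> \<Longrightarrow> P' \<in> \<P> \<Longrightarrow>
    s A C (P ** P') \<le> s A B P + s B C P'"
  using is_P_score unfolding is_P_score_def by blast

lemma const_mat_1_in_sync_families: "(\<lambda>i j. mat 1) \<in> sync_families \<P> n"
  using mat_1_mem unfolding sync_families_def by simp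

lemma sync_families_swap:
  assumes "P \<in> sync_families \<P> n" "i \<in> {1..n}" "j \<in> {1..n}"
  shows "P j i = matrix_inv (P i j)"
proof -
  have "invertible (P i j)"
    using assms invertible_if_mem unfolding sync_families_def by blast
  moreover have "P i j ** P j i = mat 1"
    using assms unfolding sync_families_def by auto
  ultimately have "matrix_inv (P i j) ** (P i j ** P j i) = matrix_inv (P i j)"
    by simp
  then show ?thesis
    by (simp add: matrix_mul_assoc matrix_inv_left \<open>invertible (P i j)\<close>)
qed

lemma sync_families_conjugate:
  assumes P: "P \<in> sync_families \<P> n" and h: "\<And>i. i \<in> {1..n} \<Longrightarrow> h i \<in> \<P>"
  shows "(\<lambda>i j. h i ** P i j ** matrix_inv (h j)) \<in> sync_families \<P> n"
proof -
  have cancel: "matrix_inv (h k) ** h k = mat 1" "h k ** matrix_inv (h k) = mat 1"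
    if "k \<in> {1..n}" for k
    using h[OF that] invertible_if_mem matrix_inv_left matrix_inv_right by blast+
  have "h i ** P i k ** matrix_inv (h k) ** (h k ** P k j ** matrix_inv (h j))
      = h i ** (P i k ** P k j) ** matrix_inv (h j)"
    if "k \<in> {1..n}" for i j k
  proof -
    have "h i ** P i k ** matrix_inv (h k) ** (h k ** P k j ** matrix_inv (h j))
        = h i ** P i k ** (matrix_inv (h k) ** h k) ** P k j ** matrix_inv (h j)"
      by (simp only: matrix_mul_assoc)
    then show ?thesis
      using cancel[OF that] by (simp add: matrix_mul_assoc)
  qed
  then show ?thesis
    using P h cancel matrix_mul_mem matrix_inv_mem unfolding sync_families_def by auto
qed

lemma align_cost_nonneg:
  assumes "A ` {1..n} \<subseteq> \<Omega>" "P \<in> sync_families \<P> n"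
  shows "0 \<le> align_cost s n A P"
proof -
  have "0 \<le> s (A i) (A j) (P i j)" if "i \<in> {1..n}" "j \<in> {1..n}" for i j
  proof (rule score_nonneg)
    show "A i \<in> \<Omega>" "A j \<in> \<Omega>"
      using assms(1) that by auto
    show "P i j \<in> \<P>"
      using assms(2) that unfolding sync_families_def by blast
  qed
  then show ?thesis
    unfolding align_cost_def by (auto intro!: sum_nonneg)
qed

lemma bdd_below_align_cost:
  "A ` {1..n} \<subseteq> \<Omega> \<Longrightarrow> bdd_below (align_cost s n A ` sync_families \<P> n)"
  using align_cost_nonneg by (auto intro: bdd_belowI[of _ 0])

lemma G_align_dist_le_align_cost:
  "A ` {1..n} \<subseteq> \<Omega> \<Longrightarrow> P \<in> sync_families \<P> n \<Longrightarrow> G_align_dist s \<P> n A \<le> align_cost s n A P"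
  unfolding G_align_dist_eq_Inf_align_cost by (intro cInf_lower imageI bdd_below_align_cost)

lemma G_align_dist_nonneg: "A ` {1..n} \<subseteq> \<Omega> \<Longrightarrow> 0 \<le> G_align_dist s \<P> n A"
  unfolding G_align_dist_eq_Inf_align_cost
  using const_mat_1_in_sync_families[of n] align_cost_nonneg by (intro cInf_greatest) auto

lemma G_align_dist_const: "X \<in> \<Omega> \<Longrightarrow> G_align_dist s \<P> n (\<lambda>_. X) = 0"
  using G_align_dist_le_align_cost[OF _ const_mat_1_in_sync_families] G_align_dist_nonneg
  by (fastforce simp: align_cost_def score_self intro: antisym)

lemma score_le_align_cost:
  assumes A: "A ` {1..n} \<subseteq> \<Omega>" and P: "P \<in> sync_families \<P> n"
    and ij: "i \<in> {1..n}" "j \<in> {1..n}" "i \<noteq> j"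
  shows "s (A i) (A j) (P i j) \<le> align_cost s n A P"
proof -
  define f where "f ij = s (A (fst ij)) (A (snd ij)) (P (fst ij) (snd ij))" for ij
  have P_mem: "P k l \<in> \<P>" if "k \<in> {1..n}" "l \<in> {1..n}" for k l
    using P that unfolding sync_families_def by blast
  have "A i \<in> \<Omega>" "A j \<in> \<Omega>"
    using A ij by auto
  then have "s (A j) (A i) (P j i) = s (A i) (A j) (P i j)"
    using score_commute[OF _ _ P_mem[OF ij(1,2)]] sync_families_swap[OF P ij(1,2)] by simp
  then have "2 * s (A i) (A j) (P i j) = sum f {(i, j), (j, i)}"
    using ij(3) by (simp add: f_def)
  also have "\<dots> \<le> sum f ({1..n} \<times> {1..n})"
    by (rule sum_mono2) (use A ij P_mem in \<open>auto simp: f_def intro!: score_nonneg\<close>)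
  also have "\<dots> = 2 * align_cost s n A P"
    unfolding align_cost_def f_def by (simp add: sum.cartesian_product split_def)
  finally show ?thesis by simp
qed

lemma align_cost_conjugate_le:
  assumes A: "A ` {1..n} \<subseteq> \<Omega>" and X: "X \<in> \<Omega>" and P: "P \<in> sync_families \<P> n"
    and R: "R \<in> \<P>" and l: "l \<in> {1..n}"
    and h: "h l = R" "\<And>i. i \<noteq> l \<Longrightarrow> h i = mat 1"
  shows "align_cost s n A (\<lambda>i j. h i ** P i j ** matrix_inv (h j))
    \<le> align_cost s n (A(l := X)) P + (real n - 1) * s (A l) X R"
proof -
  define r where "r = s (A l) X R"
  define e where "e i j = (if (i = l) \<noteq> (j = l) then r else 0)" for i j
  have P_mem: "P i j \<in> \<P>" if "i \<in> {1..n}" "j \<in> {1..n}" for i j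
    using P that unfolding sync_families_def by blast
  have termwise: "s (A i) (A j) (h i ** P i j ** matrix_inv (h j))
      \<le> s ((A(l := X)) i) ((A(l := X)) j) (P i j) + e i j"
    if ij: "i \<in> {1..n}" "j \<in> {1..n}" for i j
  proof -
    have A_mem: "A i \<in> \<Omega>" "A j \<in> \<Omega>" "A l \<in> \<Omega>"
      using A ij l by auto
    consider "i = l" "j = l" | "i = l" "j \<noteq> l" | "i \<noteq> l" "j = l" | "i \<noteq> l" "j \<noteq> l"
      by blast
    then show ?thesis
    proof cases
      case 1
      have "P l l = mat 1"
        using P l unfolding sync_families_def by blast
      then have "h i ** P i j ** matrix_inv (h j) = mat 1"
        using 1 h(1) matrix_inv_right[OF invertible_if_mem[OF R]] by simp
      then show ?thesis
        using 1 A_mem X P_mem[OF ij] by (simp add: score_self e_def score_nonneg)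
    next
      case 2
      have "s (A l) (A j) (R ** P l j) \<le> r + s X (A j) (P l j)"
        unfolding r_def using A_mem(3) X A_mem(2) R P_mem[OF l ij(2)] by (rule score_triangle)
      then show ?thesis
        using 2 h by (simp add: e_def matrix_inv_mat_1)
    next
      case 3
      have "s (A i) (A l) (P i l ** matrix_inv R) \<le> s (A i) X (P i l) + s X (A l) (matrix_inv R)"
        using A_mem(1) X A_mem(3) P_mem[OF ij(1) l] matrix_inv_mem[OF R] by (rule score_triangle)
      moreover have "s X (A l) (matrix_inv R) = r"
        unfolding r_def using A_mem X R by (simp add: score_commute)
      ultimately show ?thesis
        using 3 h by (simp add: e_def)
    next
      case 4
      then show ?thesis
        using h by (simp add: e_def matrix_inv_mat_1)
    qed
  qed
  have sum_off_l: "(\<Sum>i\<in>{1..n} - {l}. c) = (real n - 1) * c" for c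
    using l by (simp add: of_nat_diff)
  have row_sum: "(\<Sum>j=1..n. e i j) = (if i = l then (real n - 1) * r else r)" if "i \<in> {1..n}" for i
  proof (cases "i = l")
    case True
    have "(\<Sum>j=1..n. e i j) = e i l + (\<Sum>j\<in>{1..n} - {l}. e i j)"
      using l by (simp add: sum.remove)
    also have "\<dots> = (real n - 1) * r"
      using True sum_off_l by (simp add: e_def)
    finally show ?thesis
      using True by simp
  next
    case False
    then show ?thesis
      using l by (simp add: e_def)
  qed
  have "(\<Sum>i=1..n. \<Sum>j=1..n. e i j) = (\<Sum>i=1..n. if i = l then (real n - 1) * r else r)"
    using row_sum by simp
  also have "\<dots> = (real n - 1) * r + (\<Sum>i\<in>{1..n} - {l}. r)"
    using l by (simp add: sum.remove)
  finally have "(\<Sum>i=1..n. \<Sum>j=1..n. e i j) = 2 * ((real n - 1) * r)"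
    using sum_off_l by simp
  moreover have "(\<Sum>i=1..n. \<Sum>j=1..n. s (A i) (A j) (h i ** P i j ** matrix_inv (h j)))
      \<le> (\<Sum>i=1..n. \<Sum>j=1..n. s ((A(l := X)) i) ((A(l := X)) j) (P i j) + e i j)"
    using termwise by (intro sum_mono) auto
  ultimately show ?thesis
    unfolding align_cost_def r_def by (simp add: sum.distrib)
qed

lemma G_align_dist_le_sum_align_cost:
  assumes n: "2 \<le> n" and A: "A ` {1..n} \<subseteq> \<Omega>" and X: "X \<in> \<Omega>"
    and p: "\<And>k. k \<in> {1..n} \<Longrightarrow> p k \<in> sync_families \<P> n"
  shows "G_align_dist s \<P> n A \<le> (\<Sum>k=1..n. align_cost s n (A(k := X)) (p k))"
proof -
  define r where "r k = s (A 1) X (p k 1 k)" for k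
  define b where "b = arg_min_on r {2..n}"
  have b: "b \<in> {2..n}" "\<And>k. k \<in> {2..n} \<Longrightarrow> r b \<le> r k"
    using arg_min_if_finite[of "{2..n}" r] n unfolding b_def by (auto simp: not_less)
  define R where "R = p b 1 b"
  define h where "h i = (if i = 1 then R else mat 1)" for i :: nat
  have R: "R \<in> \<P>"
    using p[of b] b n unfolding R_def sync_families_def by auto
  have "G_align_dist s \<P> n A \<le> align_cost s n A (\<lambda>i j. h i ** p 1 i j ** matrix_inv (h j))"
    using A p[of 1] n R mat_1_mem
    by (intro G_align_dist_le_align_cost sync_families_conjugate) (auto simp: h_def)
  also have "\<dots> \<le> align_cost s n (A(1 := X)) (p 1) + (real n - 1) * r b"
    unfolding r_def R_def[symmetric]
    using A X p[of 1] n R by (intro align_cost_conjugate_le) (auto simp: h_def)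
  finally have conjugated:
    "G_align_dist s \<P> n A \<le> align_cost s n (A(1 := X)) (p 1) + (real n - 1) * r b" .
  have "(real n - 1) * r b \<le> (\<Sum>k=2..n. r k)"
    using sum_bounded_below[of "{2..n}" "r b" r] b(2) n by (simp add: of_nat_diff)
  also have "\<dots> \<le> (\<Sum>k=2..n. align_cost s n (A(k := X)) (p k))"
  proof (rule sum_mono)
    fix k assume k: "k \<in> {2..n}"
    then have "s ((A(k := X)) 1) ((A(k := X)) k) (p k 1 k) \<le> align_cost s n (A(k := X)) (p k)"
      using A X p[of k] by (intro score_le_align_cost) auto
    then show "r k \<le> align_cost s n (A(k := X)) (p k)"
      using k unfolding r_def by simp
  qed
  finally have "(real n - 1) * r b \<le> (\<Sum>k=2..n. align_cost s n (A(k := X)) (p k))" .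
  moreover have "(\<Sum>k=1..n. align_cost s n (A(k := X)) (p k))
      = align_cost s n (A(1 := X)) (p 1) + (\<Sum>k=2..n. align_cost s n (A(k := X)) (p k))"
    using n by (simp add: sum.atLeast_Suc_atMost numeral_2_eq_2)
  ultimately show ?thesis
    using conjugated by linarith
qed

lemma G_align_dist_triangle:
  assumes "2 \<le> n" "A ` {1..n} \<subseteq> \<Omega>" "X \<in> \<Omega>"
  shows "G_align_dist s \<P> n A \<le> (\<Sum>k=1..n. G_align_dist s \<P> n (A(k := X)))"
proof -
  have "G_align_dist s \<P> n A \<le> (\<Sum>k=1..n. Inf (align_cost s n (A(k := X)) ` sync_families \<P> n))"
  proof (rule le_sum_cInf_if_le_sum_choice)
    show "sync_families \<P> n \<noteq> {}" for k
      using const_mat_1_in_sync_families by blast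
    show "bdd_below (align_cost s n (A(k := X)) ` sync_families \<P> n)" for k
      using assms by (intro bdd_below_align_cost) auto
    show "G_align_dist s \<P> n A \<le> (\<Sum>k=1..n. align_cost s n (A(k := X)) (p k))"
      if "\<And>k. k \<in> {1..n} \<Longrightarrow> p k \<in> sync_families \<P> n" for p
      using assms that by (rule G_align_dist_le_sum_align_cost)
  qed simp
  then show ?thesis
    by (simp only: G_align_dist_eq_Inf_align_cost)
qed

end

theorem theorem2:
  fixes \<Omega> \<P> :: "'m::finite mat set"
    and s :: "'m mat \<Rightarrow> 'm mat \<Rightarrow> 'm mat \<Rightarrow> real"
    and n :: nat
  assumes "is_P_score \<Omega> \<P> s"
    and "n \<ge> 2"
  shows "pseudo_n_metric \<Omega> n (G_align_dist s \<P> n)"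
proof -
  interpret P_score \<Omega> \<P> s
    by (rule P_score.intro) (rule assms(1))
  show ?thesis
    unfolding pseudo_n_metric_def
  proof (intro conjI allI impI ballI)
    fix A :: "nat \<Rightarrow> 'm mat"
    assume "\<forall>i\<in>{1..n}. A i \<in> \<Omega>"
    then show "0 \<le> G_align_dist s \<P> n A"
      by (intro G_align_dist_nonneg) auto
  next
    fix A :: "nat \<Rightarrow> 'm mat" and \<sigma>
    assume "\<sigma> permutes {1..n}"
    then show "G_align_dist s \<P> n A = G_align_dist s \<P> n (\<lambda>i. A (\<sigma> i))"
      by (simp add: G_align_dist_permute)
  next
    fix A :: "nat \<Rightarrow> 'm mat"
    assume "\<forall>i\<in>{1..Suc n}. A i \<in> \<Omega>"
    then show "G_align_dist s \<P> n A \<le> (\<Sum>i=1..n. G_align_dist s \<P> n (A(i := A (Suc n))))"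
      using assms(2) by (intro G_align_dist_triangle) auto
  next
    fix X
    assume "X \<in> \<Omega>"
    then show "G_align_dist s \<P> n (\<lambda>_. X) = 0"
      by (rule G_align_dist_const)
  qed
qed

end
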